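(* Let $n\ge2$, $x_0>0$, $K\ge0$. Let $\mathcal{E}(x_0)$ be the set of measures $\nu$ on $[0,\infty)\times[0,\infty)$ with no mass on $\{(x,y):y<x\text{ or }y<x_0\}$, and let $\mathcal{E}_D(x_0)\subset\mathcal{E}(x_0)$ be the set of probability laws of pairs $(X,Y)$ with $X\le Y$, $X$ a continuous (atom-free) random variable with mean $x_0$, and $\mathbb{E}[X-z;\,Y\ge z]=0$ for all $z\ge x_0$. For a distribution function $F$, reals $\lambda,\gamma$ and a function $\eta$ on $[x_0,\infty)$, define $$\mathcal{L}_F(\nu;\lambda,\gamma,\eta)=\int_0^\infty\!\!\int_0^\infty\Big[(1+K)F(x)^{n-1}-KF(y)^{n-1}-\lambda x-\gamma-\int_{x_0}^{y}\eta(z)(x-z)\,dz\Big]\nu(dx,dy)+\lambda x_0+\gamma$$ (whenever the integrals are well defined). Suppose $\nu^*\in\mathcal{E}_D(x_0)$ and $\lambda^*,\gamma^*,\eta^*$ satisfy $$\mathcal{L}_{G^*}(\nu^*;\lambda^*,\gamma^*,\eta^* )\ge\mathcal{L}_{G^*}(\nu;\lambda^*,\gamma^*,\eta^* )\quad\text{for all }\nu\in\mathcal{E}(x_0),$$ where $G^*(x)=\nu^*([0,x]\times(0,\infty))$. Then $\nu^*$ is a symmetric, atom-free Nash equilibrium, in the sense that $$\int\!\!\int\big[(1+K)G^*(x)^{n-1}-KG^*(y)^{n-1}\big]\nu^*(dx,dy)\ \ge\ \int\!\!\int\big[(1+K)G^*(x)^{n-1}-KG^*(y)^{n-1}\big]\nu(dx,dy)$$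 for every $\nu\in\mathcal{E}(x_0)$ with $\int\!\!\int x\,\nu(dx,dy)=x_0$, $\int\!\!\int\nu(dx,dy)=1$ and $\int_{x=0}^\infty\int_{y=z}^\infty(x-z)\,\nu(dx,dy)=0$ for all $z\ge x_0$.
   Context: Setting: the contest with regret over past failure to stop. Each of $n$ players stops an independent Brownian motion $X^i$ started at $x_0$ and absorbed at $0$ at a stopping time $\tau^i$ of her own filtration, and $M^i=\sup_{t\le\tau^i}X^i_t$. Player $i$ wins 1 if her stopped value is strictly highest, and is penalised $K$ if her stopped value is not highest but $M^i$ exceeds all other stopped values. If the other players' stopped values have the atom-free law $F$, player $i$'s expected payoff when $(X^i_{\tau^i},M^i)$ has law $\nu$ equals $\int\!\!\int[(1+K)F(x)^{n-1}-KF(y)^{n-1}]\nu(dx,dy)$; the three displayed constraints are those satisfied by the law of $(X_{\tau},M_{\tau})$ for a uniformly integrable stopped martingale with mean $x_0$. A symmetric atom-free Nash equilibrium is a law $\nu^*$ that maximizes this expected payoff, with $F=G^*$ the $x$-marginal of $\nu^*$, over the feasible laws, as displayed in the conclusion. *)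

theory Defs
  imports "HOL-Probability.Probability"
begin

definition E_set :: "real \<Rightarrow> (real \<times> real) measure set" where
  "E_set x0 = {\<nu>. sets \<nu> = sets borel \<and>
     emeasure \<nu> {p. \<not> (0 \<le> fst p \<and> 0 \<le> snd p \<and> fst p \<le> snd p \<and> x0 \<le> snd p)} = 0}"

definition ED_set :: "real \<Rightarrow> (real \<times> real) measure set" where
  "ED_set x0 = {\<nu> \<in> E_set x0. prob_space \<nu> \<and>
     (\<forall>x. emeasure \<nu> ({x} \<times> UNIV) = 0) \<and>
     integrable \<nu> fst \<and> (\<integral>p. fst p \<partial>\<nu>) = x0 \<and>
     (\<forall>z\<ge>x0. (\<integral>p. (if z \<le> snd p then fst p - z else 0) \<partial>\<nu>) = 0)}"

definition Gstar :: "(real \<times> real) measure \<Rightarrow> real \<Rightarrow> real" where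
  "Gstar \<nu> x = measure \<nu> ({0..x} \<times> {0<..})"

definition payoff :: "nat \<Rightarrow> real \<Rightarrow> (real \<Rightarrow> real) \<Rightarrow> real \<times> real \<Rightarrow> real" where
  "payoff n K F p = (1 + K) * F (fst p) ^ (n - 1) - K * F (snd p) ^ (n - 1)"

definition lag_integrand :: "nat \<Rightarrow> real \<Rightarrow> (real \<Rightarrow> real) \<Rightarrow> real \<Rightarrow> real \<Rightarrow> real
    \<Rightarrow> (real \<Rightarrow> real) \<Rightarrow> real \<times> real \<Rightarrow> real" where
  "lag_integrand n K F x0 lam gam eta p =
     payoff n K F p - lam * fst p - gam - (LBINT z=x0..snd p. eta z * (fst p - z))"

definition lag_defined :: "nat \<Rightarrow> real \<Rightarrow> (real \<Rightarrow> real) \<Rightarrow> real \<Rightarrow> real \<Rightarrow> real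
    \<Rightarrow> (real \<Rightarrow> real) \<Rightarrow> (real \<times> real) measure \<Rightarrow> bool" where
  "lag_defined n K F x0 lam gam eta \<nu> \<longleftrightarrow>
     (AE p in \<nu>. set_integrable lborel {x0..snd p} (\<lambda>z. eta z * (fst p - z))) \<and>
     integrable \<nu> (lag_integrand n K F x0 lam gam eta)"

definition lag_val :: "nat \<Rightarrow> real \<Rightarrow> (real \<Rightarrow> real) \<Rightarrow> real \<Rightarrow> real \<Rightarrow> real
    \<Rightarrow> (real \<Rightarrow> real) \<Rightarrow> (real \<times> real) measure \<Rightarrow> real" where
  "lag_val n K F x0 lam gam eta \<nu> =
     (\<integral>p. lag_integrand n K F x0 lam gam eta p \<partial>\<nu>) + lam * x0 + gam"

end

theory Submission
  imports Defs
begin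

text \<open>Testing the saddle-point inequality against large point masses shows that the Lagrangian
  integrand is nonpositive wherever it is defined. A feasible law is truncated at a level \<open>r\<close> by
  moving its mass above \<open>Y = r\<close> to \<open>(r, r)\<close>; this preserves the mean and the constraints up to
  level \<open>r\<close>, so by Fubini the \<open>\<eta>\<close>-term integrates to zero and the Lagrangian of the truncated law
  is its expected payoff. The same truncation, together with the pointwise bound, shows that the
  \<open>\<eta>\<close>-term of \<open>\<nu>*\<close> has nonnegative expectation. Hence
  \<open>E\<^sub>\<nu>[payoff] - (1 - G*(r)\<^sup>n\<^sup>-\<^sup>1) \<le> E\<^sub>\<nu>\<^sub>*[payoff]\<close>, and the error vanishes along levels \<open>r\<close> at
  which \<open>\<eta>\<close> is integrable on \<open>[x0, r]\<close>; that such levels exhaust \<open>Y\<close> under \<open>\<nu>*\<close> uses that \<open>X\<close>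
  has no atoms.\<close>
lemma measurable_fst_borel [measurable]:
  "(fst :: 'a::topological_space \<times> 'b::topological_space \<Rightarrow> 'a) \<in> borel_measurable borel"
  by (rule borel_measurable_continuous_onI) (intro continuous_intros)

lemma measurable_snd_borel [measurable]:
  "(snd :: 'a::topological_space \<times> 'b::topological_space \<Rightarrow> 'b) \<in> borel_measurable borel"
  by (rule borel_measurable_continuous_onI) (intro continuous_intros)

section \<open>Integrals on intervals\<close>

lemma set_integrable_mult_bounded:
  fixes eta h :: "real \<Rightarrow> real"
  assumes eta: "set_integrable lborel A eta" and h: "h \<in> borel_measurable borel"
    and bound: "\<And>z. z \<in> A \<Longrightarrow> \<bar>h z\<bar> \<le> C"
  shows "set_integrable lborel A (\<lambda>z. eta z * h z)"
proof (rule set_integrable_bound)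
  show "set_integrable lborel A (\<lambda>z. eta z * C)"
    using eta by (rule set_integrable_mult_left)
  have "(\<lambda>z. indicator A z * eta z) \<in> borel_measurable borel"
    using borel_measurable_integrable[OF eta[unfolded set_integrable_def]] by simp
  with h have "(\<lambda>z. (indicator A z * eta z) * h z) \<in> borel_measurable borel"
    by measurable
  then show "set_borel_measurable lborel A (\<lambda>z. eta z * h z)"
    unfolding set_borel_measurable_def by (simp add: mult.assoc)
  have "\<bar>eta z\<bar> * \<bar>h z\<bar> \<le> \<bar>eta z\<bar> * \<bar>C\<bar>" if "z \<in> A" for z
    using bound[OF that] by (intro mult_left_mono) auto
  then show "AE z in lborel. z \<in> A \<longrightarrow> norm (eta z * h z) \<le> norm (eta z * C)"
    by (auto simp: abs_mult)
qed

lemma set_integrable_mult_affine: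
  fixes eta :: "real \<Rightarrow> real"
  assumes "set_integrable lborel {a..b} eta"
  shows "set_integrable lborel {a..b} (\<lambda>z. eta z * (x - z))"
  by (rule set_integrable_mult_bounded[OF assms, where C="\<bar>x\<bar> + \<bar>a\<bar> + \<bar>b\<bar>"]) auto

lemma set_integrable_cancel_affine:
  fixes eta :: "real \<Rightarrow> real"
  assumes int: "set_integrable lborel A (\<lambda>z. eta z * (x - z))"
    and d: "0 < d" and far: "\<And>z. z \<in> A \<Longrightarrow> d \<le> \<bar>x - z\<bar>"
  shows "set_integrable lborel A eta"
proof -
  have "set_integrable lborel A (\<lambda>z. (eta z * (x - z)) * (1 / (x - z)))"
    by (rule set_integrable_mult_bounded[OF int, where C="1/d"])
      (use far d in \<open>auto simp: abs_divide frac_le\<close>)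
  moreover have "(eta z * (x - z)) * (1 / (x - z)) = eta z" if "z \<in> A" for z
    using far[OF that] d by (auto simp: field_simps)
  ultimately show ?thesis
    by (subst set_integrable_cong[where f'="\<lambda>z. (eta z * (x - z)) * (1 / (x - z))"]) auto
qed

lemma set_integral_inverse_square:
  fixes a b :: real
  assumes "0 < a" "a \<le> b"
  shows "set_integrable lborel {a..b} (\<lambda>y. 1 / y^2)"
    and "(LBINT y:{a..b}. 1 / y^2) = 1/a - 1/b"
proof -
  show "set_integrable lborel {a..b} (\<lambda>y. 1 / y^2)"
    using assms by (intro borel_integrable_atLeastAtMost') (auto intro!: continuous_intros)
  have "(LBINT y=a..b. 1 / y^2) = (- 1 / b) - (- 1 / a)"
  proof (rule interval_integral_FTC_finite)
    show "continuous_on {min a b..max a b} (\<lambda>y. 1 / y^2)"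
      using assms by (intro continuous_intros) auto
    fix x assume "min a b \<le> x" "x \<le> max a b"
    with assms have "((\<lambda>y. - 1 / y) has_real_derivative (1 / x^2)) (at x)"
      by (auto intro!: derivative_eq_intros simp: power2_eq_square field_simps)
    then show "((\<lambda>y. - 1 / y) has_vector_derivative (1 / x^2)) (at x within {min a b..max a b})"
      by (simp add: has_real_derivative_iff_has_vector_derivative has_vector_derivative_at_within)
  qed
  then show "(LBINT y:{a..b}. 1 / y^2) = 1/a - 1/b"
    using assms by (simp add: interval_integral_Icc)
qed

lemma (in pair_sigma_finite) integrable_dominated_by_product:
  fixes F :: "'a \<times> 'b \<Rightarrow> real"
  assumes F[measurable]: "F \<in> borel_measurable (M1 \<Otimes>\<^sub>M M2)"
    and g: "integrable M1 g" and e: "integrable M2 e"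
    and bound: "\<And>x y. \<bar>F (x, y)\<bar> \<le> \<bar>g x\<bar> * \<bar>e y\<bar>"
  shows "integrable (M1 \<Otimes>\<^sub>M M2) F"
proof (rule Fubini_integrable[OF F])
  have Fx: "integrable M2 (\<lambda>y. F (x, y))" if "x \<in> space M1" for x
    by (rule Bochner_Integration.integrable_bound[where f="\<lambda>y. \<bar>g x\<bar> * e y"])
      (use e bound that in \<open>auto simp: abs_mult\<close>)
  then show "AE x in M1. integrable M2 (\<lambda>y. F (x, y))" by simp
  show "integrable M1 (\<lambda>x. \<integral>y. norm (F (x, y)) \<partial>M2)"
  proof (rule Bochner_Integration.integrable_bound)
    show "integrable M1 (\<lambda>x. \<bar>g x\<bar> * (\<integral>y. \<bar>e y\<bar> \<partial>M2))"
      using g by simp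
    show "(\<lambda>x. \<integral>y. norm (F (x, y)) \<partial>M2) \<in> borel_measurable M1"
      by measurable
    show "AE x in M1. norm (\<integral>y. norm (F (x, y)) \<partial>M2) \<le> norm (\<bar>g x\<bar> * (\<integral>y. \<bar>e y\<bar> \<partial>M2))"
    proof (rule AE_I2)
      fix x assume "x \<in> space M1"
      then have "(\<integral>y. norm (F (x, y)) \<partial>M2) \<le> (\<integral>y. \<bar>g x\<bar> * \<bar>e y\<bar> \<partial>M2)"
        using Fx e bound by (intro integral_mono) auto
      then show "norm (\<integral>y. norm (F (x, y)) \<partial>M2) \<le> norm (\<bar>g x\<bar> * (\<integral>y. \<bar>e y\<bar> \<partial>M2))"
        by simp
    qed
  qed
qed

text \<open>Since \<open>b - z = b z \<integral>[z,b] dy/y\<^sup>2\<close>, Fubini turns the left-hand side into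
  \<open>b \<integral>[a,b] (\<integral>[a,y] z \<eta>(z) dz) dy/y\<^sup>2 \<le> b M (1/a - 1/b)\<close>.\<close>
lemma set_integral_gap_le:
  fixes eta :: "real \<Rightarrow> real"
  assumes ab: "0 < a" "a \<le> b" and eta: "set_integrable lborel {a..b} eta"
    and moment: "\<And>y. y \<in> {a..b} \<Longrightarrow> (LBINT z:{a..y}. z * eta z) \<le> M" and "0 \<le> M"
  shows "(LBINT z:{a..b}. eta z * (b - z)) \<le> M * b / a"
proof -
  have P: "pair_sigma_finite lborel lborel"
    by (simp add: pair_sigma_finite_def lborel.sigma_finite_measure_axioms)
  define e where "e = (\<lambda>z. indicator {a..b} z * eta z)"
  have [measurable]: "e \<in> borel_measurable borel"
    using borel_measurable_integrable[OF eta[unfolded set_integrable_def]] by (simp add: e_def)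
  have e_int: "integrable lborel e" using eta unfolding set_integrable_def e_def by simp
  define F where "F = (\<lambda>(y::real, z::real). e z * (if z \<le> y \<and> y \<le> b then z / y^2 else 0))"
  have [measurable]: "F \<in> borel_measurable (lborel \<Otimes>\<^sub>M lborel)" unfolding F_def by measurable
  have F_int: "integrable (lborel \<Otimes>\<^sub>M lborel) F"
  proof (rule pair_sigma_finite.integrable_dominated_by_product[OF P, where g="\<lambda>y. indicator {a..b} y * (b / a^2)"])
    show "integrable lborel (\<lambda>y. indicator {a..b} y * (b / a^2))"
      using borel_integrable_atLeastAtMost'[of a b "\<lambda>_. b / a^2"]
      unfolding set_integrable_def by (simp add: mult.commute)
    show "\<bar>F (y, z)\<bar> \<le> \<bar>indicator {a..b} y * (b / a^2)\<bar> * \<bar>e z\<bar>" for y z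
    proof (cases "z \<in> {a..b} \<and> z \<le> y \<and> y \<le> b")
      case True
      then have "a^2 \<le> y^2" using ab by (intro power_mono) auto
      then have "\<bar>z / y^2\<bar> \<le> b / a^2" using True ab by (auto intro!: frac_le)
      then have "\<bar>eta z\<bar> * \<bar>z / y^2\<bar> \<le> \<bar>eta z\<bar> * (b / a^2)" by (rule mult_left_mono) simp
      with True ab show ?thesis by (simp add: F_def e_def abs_mult mult.commute)
    qed (auto simp: F_def e_def)
  qed (use e_int in simp_all)
  have inner_z: "(\<integral>z. F (y, z) \<partial>lborel) = indicator {a..b} y * ((LBINT z:{a..y}. z * eta z) / y^2)" for y
  proof (cases "y \<in> {a..b}")
    case True
    have "(\<integral>z. F (y, z) \<partial>lborel) = (\<integral>z. indicator {a..y} z *\<^sub>R (z * eta z) / y^2 \<partial>lborel)"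
      using True unfolding F_def e_def
      by (intro Bochner_Integration.integral_cong) (auto simp: indicator_def)
    with True show ?thesis unfolding set_lebesgue_integral_def by simp
  next
    case False
    then have "F (y, z) = 0" for z by (auto simp: F_def e_def)
    with False show ?thesis by simp
  qed
  have inner_y: "(\<integral>y. F (y, z) \<partial>lborel) = e z * (1 - z / b)" for z
  proof (cases "z \<in> {a..b}")
    case True
    then have z: "0 < z" "z \<le> b" using ab by auto
    have "(\<integral>y. F (y, z) \<partial>lborel) = (\<integral>y. (e z * z) * (indicator {z..b} y *\<^sub>R (1 / y^2)) \<partial>lborel)"
      unfolding F_def by (intro Bochner_Integration.integral_cong) (auto simp: indicator_def)
    also have "\<dots> = (e z * z) * (LBINT y:{z..b}. 1 / y^2)"
      unfolding set_lebesgue_integral_def by (rule integral_mult_right_zero)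
    also have "\<dots> = (e z * z) * (1/z - 1/b)"
      using set_integral_inverse_square(2)[OF z] by simp
    also have "\<dots> = e z * (1 - z / b)" using z by (simp add: field_simps)
    finally show ?thesis .
  qed (simp add: F_def e_def)
  have "(LBINT z:{a..b}. eta z * (b - z)) / b = (\<integral>z. (\<integral>y. F (y, z) \<partial>lborel) \<partial>lborel)"
    unfolding inner_y e_def set_lebesgue_integral_def using ab
    by (simp add: field_simps flip: Bochner_Integration.integral_divide_zero)
  also have "\<dots> = (\<integral>y. (\<integral>z. F (y, z) \<partial>lborel) \<partial>lborel)"
    using pair_sigma_finite.Fubini_integral[OF P, of "\<lambda>y z. F (y, z)"] F_int by simp
  also have "\<dots> \<le> (\<integral>y. M * (indicator {a..b} y *\<^sub>R (1 / y^2)) \<partial>lborel)"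
  proof (rule integral_mono)
    show "integrable lborel (\<lambda>y. \<integral>z. F (y, z) \<partial>lborel)"
      using pair_sigma_finite.integrable_fst'[OF P F_int] by simp
    show "integrable lborel (\<lambda>y. M * (indicator {a..b} y *\<^sub>R (1 / y^2)))"
      using set_integral_inverse_square(1)[OF ab] unfolding set_integrable_def
      by (rule integrable_mult_right)
    show "(\<integral>z. F (y, z) \<partial>lborel) \<le> M * (indicator {a..b} y *\<^sub>R (1 / y^2))" for y
      using moment[of y] by (cases "y \<in> {a..b}") (auto simp: inner_z divide_right_mono)
  qed
  also have "\<dots> = M * (LBINT y:{a..b}. 1 / y^2)"
    unfolding set_lebesgue_integral_def by (rule integral_mult_right_zero)
  also have "\<dots> = M * (1/a - 1/b)"
    using set_integral_inverse_square(2)[OF ab] by simp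
  also have "\<dots> \<le> M / a" using \<open>0 \<le> M\<close> ab by (simp add: field_simps)
  finally show ?thesis using ab by (simp add: field_simps)
qed

section \<open>The multiplier term of the constraints\<close>

definition eta_penalty :: "real \<Rightarrow> (real \<Rightarrow> real) \<Rightarrow> real \<times> real \<Rightarrow> real" where
  "eta_penalty x0 eta p = (LBINT z=x0..snd p. eta z * (fst p - z))"

lemma eta_penalty_Icc:
  "x0 \<le> snd p \<Longrightarrow> eta_penalty x0 eta p = (LBINT z:{x0..snd p}. eta z * (fst p - z))"
  by (simp add: eta_penalty_def interval_integral_Icc)

text \<open>By Fubini the expectation of the penalty is \<open>\<integral> \<eta>(z) E[X - z; Y \<ge> z] dz = 0\<close>.
  Since \<open>\<eta>\<close> itself need not be measurable, measurability of the penalty is a hypothesis.\<close>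
lemma integral_eta_penalty_eq_0:
  fixes \<nu> :: "(real \<times> real) measure" and eta :: "real \<Rightarrow> real"
  assumes "finite_measure \<nu>" and sets[measurable_cong]: "sets \<nu> = sets borel"
    and eta: "set_integrable lborel {x0..R} eta"
    and bounded: "AE p in \<nu>. x0 \<le> snd p \<and> snd p \<le> R"
    and fst: "integrable \<nu> fst"
    and constraint: "\<And>z. z \<in> {x0..R} \<Longrightarrow> (\<integral>p. (if z \<le> snd p then fst p - z else 0) \<partial>\<nu>) = 0"
    and measurable: "eta_penalty x0 eta \<in> borel_measurable borel"
  shows "integrable \<nu> (eta_penalty x0 eta)" and "(\<integral>p. eta_penalty x0 eta p \<partial>\<nu>) = 0"
proof -
  interpret finite_measure \<nu> by fact
  interpret P: pair_sigma_finite \<nu> lborel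
    by (simp add: pair_sigma_finite_def sigma_finite_measure_axioms lborel.sigma_finite_measure_axioms)
  define e where "e = (\<lambda>z. indicator {x0..R} z * eta z)"
  have [measurable]: "e \<in> borel_measurable borel"
    using borel_measurable_integrable[OF eta[unfolded set_integrable_def]] by (simp add: e_def)
  have e_int: "integrable lborel e" using eta unfolding set_integrable_def e_def by simp
  define F where "F = (\<lambda>(p::real\<times>real, z::real). e z * (if z \<le> snd p then fst p - z else 0))"
  have [measurable]: "F \<in> borel_measurable (\<nu> \<Otimes>\<^sub>M lborel)" unfolding F_def by measurable
  have F_int: "integrable (\<nu> \<Otimes>\<^sub>M lborel) F"
  proof (rule P.integrable_dominated_by_product[where g="\<lambda>p. \<bar>fst p\<bar> + \<bar>x0\<bar> + \<bar>R\<bar>"])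
    show "integrable \<nu> (\<lambda>p. \<bar>fst p\<bar> + \<bar>x0\<bar> + \<bar>R\<bar>)" using fst by auto
    show "\<bar>F (p, z)\<bar> \<le> \<bar>\<bar>fst p\<bar> + \<bar>x0\<bar> + \<bar>R\<bar>\<bar> * \<bar>e z\<bar>" for p z
    proof (cases "z \<in> {x0..R}")
      case True
      then have "\<bar>fst p - z\<bar> \<le> \<bar>fst p\<bar> + \<bar>x0\<bar> + \<bar>R\<bar>" by auto
      then have "\<bar>eta z\<bar> * \<bar>fst p - z\<bar> \<le> \<bar>eta z\<bar> * (\<bar>fst p\<bar> + \<bar>x0\<bar> + \<bar>R\<bar>)"
        by (rule mult_left_mono) simp
      with True show ?thesis by (simp add: F_def e_def abs_mult mult.commute)
    qed (simp add: F_def e_def)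
  qed (use e_int in simp_all)
  have penalty_eq: "AE p in \<nu>. eta_penalty x0 eta p = (\<integral>z. F (p, z) \<partial>lborel)"
    using bounded
  proof eventually_elim
    case (elim p)
    then show ?case
      unfolding eta_penalty_Icc[OF conjunct1[OF elim]] set_lebesgue_integral_def F_def e_def
      by (intro Bochner_Integration.integral_cong) (auto simp: indicator_def)
  qed
  have [measurable]: "eta_penalty x0 eta \<in> borel_measurable \<nu>" using measurable by simp
  show "integrable \<nu> (eta_penalty x0 eta)"
  proof (rule integrable_cong_AE_imp[OF P.integrable_fst'[OF F_int]])
    show "AE p in \<nu>. (\<integral>z. F (p, z) \<partial>lborel) = eta_penalty x0 eta p"
      using penalty_eq by eventually_elim simp
  qed measurable
  have "(\<integral>p. eta_penalty x0 eta p \<partial>\<nu>) = (\<integral>p. (\<integral>z. F (p, z) \<partial>lborel) \<partial>\<nu>)"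
    using penalty_eq by (intro integral_cong_AE) auto
  also have "\<dots> = (\<integral>z. (\<integral>p. F (p, z) \<partial>\<nu>) \<partial>lborel)"
    using P.Fubini_integral[of "\<lambda>p z. F (p, z)"] F_int by simp
  also have "\<dots> = (\<integral>z. e z * (\<integral>p. (if z \<le> snd p then fst p - z else 0) \<partial>\<nu>) \<partial>lborel)"
    by (simp add: F_def)
  also have "\<dots> = (\<integral>z. 0 \<partial>(lborel :: real measure))"
    by (intro Bochner_Integration.integral_cong) (auto simp: e_def indicator_def constraint)
  finally show "(\<integral>p. eta_penalty x0 eta p \<partial>\<nu>) = 0" by simp
qed

lemma integrable_tail:
  fixes \<mu> :: "(real \<times> real) measure" and f :: "real \<times> real \<Rightarrow> real"
  assumes [measurable_cong]: "sets \<mu> = sets borel" and f: "integrable \<mu> f"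
  shows "integrable \<mu> (\<lambda>p. if c < snd p then f p else 0)"
proof (rule Bochner_Integration.integrable_bound[OF f])
  have [measurable]: "f \<in> borel_measurable \<mu>" using f by (rule borel_measurable_integrable)
  show "(\<lambda>p. if c < snd p then f p else 0) \<in> borel_measurable \<mu>" by measurable
qed auto

lemma tendsto_integral_tail:
  fixes \<nu> :: "(real \<times> real) measure" and f :: "real \<times> real \<Rightarrow> real"
  assumes [measurable_cong]: "sets \<nu> = sets borel" and f: "integrable \<nu> f"
    and exhausting: "AE p in \<nu>. eventually (\<lambda>k. snd p \<le> R k) sequentially"
  shows "(\<lambda>k. \<integral>p. (if R k < snd p then f p else 0) \<partial>\<nu>) \<longlonglongrightarrow> 0"
proof -
  have [measurable]: "f \<in> borel_measurable \<nu>" using f by (rule borel_measurable_integrable)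
  have "(\<lambda>k. \<integral>p. (if R k < snd p then f p else 0) \<partial>\<nu>) \<longlonglongrightarrow> (\<integral>p. 0 \<partial>\<nu>)"
  proof (rule integral_dominated_convergence[where w="\<lambda>p. \<bar>f p\<bar>"])
    show "AE p in \<nu>. (\<lambda>k. if R k < snd p then f p else 0) \<longlonglongrightarrow> 0"
      using exhausting
    proof eventually_elim
      case (elim p)
      then have "eventually (\<lambda>k. (if R k < snd p then f p else 0) = 0) sequentially"
        by eventually_elim auto
      then show ?case by (rule tendsto_eventually)
    qed
  qed (use f in auto)
  then show ?thesis by simp
qed

lemma constraint_strict:
  fixes \<nu> :: "(real \<times> real) measure"
  assumes "finite_measure \<nu>" and [measurable_cong]: "sets \<nu> = sets borel"
    and fst: "integrable \<nu> fst"
    and constraint: "\<forall>z\<ge>x0. (\<integral>p. (if z \<le> snd p then fst p - z else 0) \<partial>\<nu>) = 0"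
    and "x0 \<le> R"
  shows "(\<integral>p. (if R < snd p then fst p - R else 0) \<partial>\<nu>) = 0"
proof -
  interpret finite_measure \<nu> by fact
  define s where "s i p = (if R + 1 / Suc i \<le> snd p then fst p - (R + 1 / Suc i) else 0)" for i p
  have s_bound: "\<bar>s i p\<bar> \<le> \<bar>fst p\<bar> + \<bar>R\<bar> + 1" for i p
  proof -
    define t where "t = 1 / real (Suc i)"
    have "0 \<le> t" "t \<le> 1" by (auto simp: t_def field_simps)
    then show ?thesis unfolding s_def t_def[symmetric] by auto
  qed
  have R_lim: "(\<lambda>i. R + 1 / real (Suc i)) \<longlonglongrightarrow> R"
    using tendsto_add[OF tendsto_const LIMSEQ_inverse_real_of_nat] by (simp add: inverse_eq_divide)
  have s_lim: "(\<lambda>i. s i p) \<longlonglongrightarrow> (if R < snd p then fst p - R else 0)" for p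
  proof (cases "R < snd p")
    case True
    have "eventually (\<lambda>i. s i p = fst p - (R + 1 / real (Suc i))) sequentially"
      using order_tendstoD(2)[OF R_lim True] by eventually_elim (simp add: s_def)
    moreover have "(\<lambda>i. fst p - (R + 1 / real (Suc i))) \<longlonglongrightarrow> fst p - R"
      by (intro tendsto_intros R_lim)
    ultimately show ?thesis using True by (simp add: tendsto_cong)
  next
    case False
    have "s i p = 0" for i
    proof -
      have "0 < 1 / real (Suc i)" by simp
      with False have "\<not> R + 1 / real (Suc i) \<le> snd p" by linarith
      then show ?thesis unfolding s_def by (simp only: if_False)
    qed
    then show ?thesis using False by simp
  qed
  have "(\<lambda>i. \<integral>p. s i p \<partial>\<nu>) \<longlonglongrightarrow> (\<integral>p. (if R < snd p then fst p - R else 0) \<partial>\<nu>)"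
    by (rule integral_dominated_convergence[where w="\<lambda>p. \<bar>fst p\<bar> + \<bar>R\<bar> + 1"])
      (use fst s_bound s_lim in \<open>auto simp: s_def\<close>)
  moreover have "(\<integral>p. s i p \<partial>\<nu>) = 0" for i
  proof -
    have "x0 \<le> R + 1 / real (Suc i)" using \<open>x0 \<le> R\<close> by (simp add: add_increasing2)
    then show ?thesis using constraint unfolding s_def by blast
  qed
  ultimately show ?thesis using LIMSEQ_unique by (simp add: LIMSEQ_const_iff)
qed

section \<open>The integrability domain of \<open>\<eta>\<close>\<close>

definition eta_domain :: "real \<Rightarrow> (real \<Rightarrow> real) \<Rightarrow> real set" where
  "eta_domain x0 eta = {R. x0 \<le> R \<and> set_integrable lborel {x0..R} eta}"

lemma eta_domain_self: "x0 \<in> eta_domain x0 eta"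
proof -
  have "integrable lborel (\<lambda>z::real. eta x0 * indicator {x0} z)"
    by (intro integrable_mult_right integrable_real_indicator) auto
  moreover have "(\<lambda>z. indicator {x0..x0} z *\<^sub>R eta z) = (\<lambda>z. eta x0 * indicator {x0} z)"
    by (auto simp: indicator_def)
  ultimately show ?thesis unfolding eta_domain_def set_integrable_def by simp
qed

lemma eta_domain_downward:
  "R \<in> eta_domain x0 eta \<Longrightarrow> x0 \<le> R' \<Longrightarrow> R' \<le> R \<Longrightarrow> R' \<in> eta_domain x0 eta"
  unfolding eta_domain_def by (auto intro: set_integrable_subset)

lemma set_integrable_penalty_of_eta_domain:
  "R \<in> eta_domain x0 eta \<Longrightarrow> y \<le> R \<Longrightarrow> set_integrable lborel {x0..y} (\<lambda>z. eta z * (x - z))"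
  unfolding eta_domain_def by (auto intro: set_integrable_subset set_integrable_mult_affine)

text \<open>Integrability of \<open>\<eta>(z) (x - z)\<close> on \<open>[x0, y]\<close> can only fail to give integrability of \<open>\<eta>\<close>
  near \<open>z = x\<close>, and that point would have to be the supremum of the domain.\<close>
lemma mem_eta_domain:
  fixes eta :: "real \<Rightarrow> real"
  assumes y: "x0 \<le> y" "x \<le> y" and x: "x \<noteq> Sup (eta_domain x0 eta)"
    and penalty: "set_integrable lborel {x0..y} (\<lambda>z. eta z * (x - z))"
  shows "y \<in> eta_domain x0 eta"
proof (cases "bdd_above (eta_domain x0 eta)")
  case False
  then obtain R where "R \<in> eta_domain x0 eta" "y \<le> R"
    unfolding bdd_above_def by (meson linear)
  with y show ?thesis by (blast intro: eta_domain_downward)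
next
  case bdd: True
  define c where "c = Sup (eta_domain x0 eta)"
  have ne: "eta_domain x0 eta \<noteq> {}" using eta_domain_self by blast
  have "x0 \<le> c" unfolding c_def using eta_domain_self bdd by (rule cSup_upper)
  consider "x < c" | "c < x" using x unfolding c_def by linarith
  then show ?thesis
  proof cases
    case 1
    then obtain c' where c': "c' \<in> eta_domain x0 eta" "x < c'"
      unfolding c_def using less_cSup_iff[OF ne bdd] by auto
    show ?thesis
    proof (cases "y \<le> c'")
      case True
      with c' y show ?thesis by (blast intro: eta_domain_downward)
    next
      case False
      have "set_integrable lborel {c'..y} (\<lambda>z. eta z * (x - z))"
        using penalty by (rule set_integrable_subset) (use c' in \<open>auto simp: eta_domain_def\<close>)
      then have "set_integrable lborel {c'..y} eta"
        by (rule set_integrable_cancel_affine[where d="c' - x"]) (use c' in auto)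
      moreover have "set_integrable lborel {x0..c'} eta" using c' by (simp add: eta_domain_def)
      ultimately have "set_integrable lborel ({x0..c'} \<union> {c'..y}) eta"
        by (intro set_integrable_Un) auto
      moreover have "{x0..c'} \<union> {c'..y} = {x0..y}" using False c' by (auto simp: eta_domain_def)
      ultimately show ?thesis using y by (simp add: eta_domain_def)
    qed
  next
    case 2
    define c' where "c' = (c + x) / 2"
    have "set_integrable lborel {x0..c'} (\<lambda>z. eta z * (x - z))"
      using penalty by (rule set_integrable_subset) (use 2 y in \<open>auto simp: c'_def\<close>)
    then have "set_integrable lborel {x0..c'} eta"
      by (rule set_integrable_cancel_affine[where d="x - c'"]) (use 2 in \<open>auto simp: c'_def\<close>)
    with \<open>x0 \<le> c\<close> 2 have "c' \<in> eta_domain x0 eta" by (simp add: eta_domain_def c'_def)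
    then have "c' \<le> c" unfolding c_def using bdd by (rule cSup_upper)
    with 2 show ?thesis by (simp add: c'_def)
  qed
qed

lemma exhausting_sequence:
  fixes S :: "real set"
  assumes "S \<noteq> {}"
  obtains R :: "nat \<Rightarrow> real" where "\<And>k. R k \<in> S"
    and "\<And>y. y \<in> S \<Longrightarrow> eventually (\<lambda>k. y \<le> R k) sequentially"
proof (cases "bdd_above S")
  case False
  then have "\<forall>k::nat. \<exists>R\<in>S. real k \<le> R"
    unfolding bdd_above_def by (meson linear)
  then obtain R where R: "\<And>k. R k \<in> S" "\<And>k. real k \<le> R k" by metis
  have "eventually (\<lambda>k. y \<le> R k) sequentially" for y
  proof -
    obtain N :: nat where "y \<le> real N" using real_arch_simple by blast
    then show ?thesis unfolding eventually_sequentially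
      using R(2) by (meson order_trans of_nat_le_iff)
  qed
  with R(1) show ?thesis using that by blast
next
  case bdd: True
  define c where "c = Sup S"
  show ?thesis
  proof (cases "c \<in> S")
    case True
    show ?thesis
      by (rule that[of "\<lambda>_. c"]) (use True cSup_upper[OF _ bdd] in \<open>auto simp: c_def\<close>)
  next
    case False
    have "\<forall>k::nat. \<exists>R\<in>S. c - 1 / real (Suc k) < R"
    proof
      fix k :: nat
      have "c - 1 / real (Suc k) < c" by simp
      then show "\<exists>R\<in>S. c - 1 / real (Suc k) < R"
        unfolding c_def using less_cSup_iff[OF assms bdd] by blast
    qed
    then obtain R where R: "\<And>k. R k \<in> S" "\<And>k. c - 1 / real (Suc k) < R k" by metis
    have "eventually (\<lambda>k. y \<le> R k) sequentially" if y: "y \<in> S" for y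
    proof -
      have "y \<noteq> c" using y False by blast
      with cSup_upper[OF y bdd] have "y < c" unfolding c_def by linarith
      then have "eventually (\<lambda>k. 1 / real (Suc k) < c - y) sequentially"
        using order_tendstoD(2)[OF LIMSEQ_inverse_real_of_nat] by (simp add: inverse_eq_divide)
      then show ?thesis
      proof eventually_elim
        case (elim k)
        with R(2)[of k] show ?case by linarith
      qed
    qed
    with R(1) show ?thesis using that by blast
  qed
qed

section \<open>Point masses and truncation\<close>

definition point_mass :: "'a::topological_space \<Rightarrow> real \<Rightarrow> 'a measure" where
  "point_mass p t = density (return borel p) (\<lambda>_. ennreal t)"

lemma sets_point_mass [simp, measurable_cong]: "sets (point_mass p t) = sets borel"
  by (simp add: point_mass_def)

lemma AE_point_mass:
  fixes p :: "'a::t1_space"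
  assumes "P p"
  shows "AE q in point_mass p t. P q"
proof -
  have "- {p} \<in> null_sets (return borel p)"
    by (simp add: null_sets_def borel_open)
  then have "AE q in return borel p. P q"
    by (rule AE_I') (use assms in auto)
  then show ?thesis unfolding point_mass_def by (subst AE_density) auto
qed

lemma integral_point_mass:
  fixes f :: "'a::topological_space \<Rightarrow> real"
  assumes [measurable]: "f \<in> borel_measurable borel" and "0 \<le> t"
  shows "integrable (point_mass p t) f" and "(\<integral>q. f q \<partial>point_mass p t) = t * f p"
proof -
  have "integrable (return borel p) (\<lambda>q. t *\<^sub>R f q)"
    by (simp add: integrable_iff_bounded nn_integral_return)
  then show "integrable (point_mass p t) f"
    unfolding point_mass_def using \<open>0 \<le> t\<close> by (subst integrable_density) auto
  have "(\<integral>q. f q \<partial>point_mass p t) = (\<integral>q. t *\<^sub>R f q \<partial>return borel p)"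
    unfolding point_mass_def using \<open>0 \<le> t\<close> by (subst integral_density) auto
  also have "\<dots> = t * f p" by (subst integral_return) auto
  finally show "(\<integral>q. f q \<partial>point_mass p t) = t * f p" .
qed

definition truncate_at :: "real \<Rightarrow> real \<times> real \<Rightarrow> real \<times> real" where
  "truncate_at r p = (if r < snd p then (r, r) else p)"

lemma measurable_truncate_at [measurable]: "truncate_at r \<in> borel \<rightarrow>\<^sub>M borel"
  unfolding truncate_at_def by measurable

text \<open>Moving the mass above level \<open>r\<close> to \<open>(r, r)\<close> preserves the mean and the constraints up to
  level \<open>r\<close>, because \<open>E[X - r; Y > r] = 0\<close>.\<close>
lemma truncate_at_constraints:
  fixes \<nu> :: "(real \<times> real) measure"
  assumes "finite_measure \<nu>" and [measurable_cong]: "sets \<nu> = sets borel"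
    and fst: "integrable \<nu> fst"
    and constraint: "\<forall>z\<ge>x0. (\<integral>p. (if z \<le> snd p then fst p - z else 0) \<partial>\<nu>) = 0"
    and "x0 \<le> r"
  shows "integrable \<nu> (\<lambda>p. fst (truncate_at r p))"
    and "(\<integral>p. fst (truncate_at r p) \<partial>\<nu>) = (\<integral>p. fst p \<partial>\<nu>)"
    and "\<And>z. z \<in> {x0..r} \<Longrightarrow>
      (\<integral>p. (if z \<le> snd (truncate_at r p) then fst (truncate_at r p) - z else 0) \<partial>\<nu>) = 0"
proof -
  interpret finite_measure \<nu> by fact
  define tail where "tail p = (if r < snd p then fst p - r else 0)" for p
  have tail_int: "integrable \<nu> tail"
    unfolding tail_def using assms(2) by (rule integrable_tail) (use fst in simp)
  have tail_0: "(\<integral>p. tail p \<partial>\<nu>) = 0"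
    unfolding tail_def by (rule constraint_strict) (use assms in auto)
  have fst_eq: "fst (truncate_at r p) = fst p - tail p" for p
    by (simp add: truncate_at_def tail_def)
  show "integrable \<nu> (\<lambda>p. fst (truncate_at r p))"
    unfolding fst_eq using fst tail_int by (rule Bochner_Integration.integrable_diff)
  show "(\<integral>p. fst (truncate_at r p) \<partial>\<nu>) = (\<integral>p. fst p \<partial>\<nu>)"
    unfolding fst_eq Bochner_Integration.integral_diff[OF fst tail_int] tail_0 by simp
  fix z assume z: "z \<in> {x0..r}"
  have excess_int: "integrable \<nu> (\<lambda>p. if z \<le> snd p then fst p - z else 0)"
    by (rule Bochner_Integration.integrable_bound[where f="\<lambda>p. \<bar>fst p\<bar> + \<bar>z\<bar>"])
      (use fst in auto)
  have "(if z \<le> snd (truncate_at r p) then fst (truncate_at r p) - z else 0)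
      = (if z \<le> snd p then fst p - z else 0) - tail p" for p
    using z by (auto simp: truncate_at_def tail_def)
  then show "(\<integral>p. (if z \<le> snd (truncate_at r p) then fst (truncate_at r p) - z else 0) \<partial>\<nu>) = 0"
    using Bochner_Integration.integral_diff[OF excess_int tail_int] tail_0 constraint z by simp
qed

lemma integral_truncated_eta_penalty:
  fixes \<nu> :: "(real \<times> real) measure" and eta :: "real \<Rightarrow> real"
  assumes "finite_measure \<nu>" and [measurable_cong]: "sets \<nu> = sets borel"
    and above: "AE p in \<nu>. x0 \<le> snd p"
    and fst: "integrable \<nu> fst"
    and constraint: "\<forall>z\<ge>x0. (\<integral>p. (if z \<le> snd p then fst p - z else 0) \<partial>\<nu>) = 0"
    and r: "r \<in> eta_domain x0 eta"
    and penalty_measurable [measurable]: "eta_penalty x0 eta \<in> borel_measurable borel"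
  shows "integrable \<nu> (\<lambda>p. eta_penalty x0 eta (truncate_at r p))"
    and "(\<integral>p. eta_penalty x0 eta (truncate_at r p) \<partial>\<nu>) = 0"
proof -
  interpret finite_measure \<nu> by fact
  have "x0 \<le> r" using r by (simp add: eta_domain_def)
  note truncated = truncate_at_constraints[OF assms(1,2) fst constraint this]
  define \<nu>r where "\<nu>r = distr \<nu> borel (truncate_at r)"
  have sets_\<nu>r [measurable_cong]: "sets \<nu>r = sets borel" by (simp add: \<nu>r_def)
  have "AE p in \<nu>. x0 \<le> snd (truncate_at r p) \<and> snd (truncate_at r p) \<le> r"
    using above by eventually_elim (use \<open>x0 \<le> r\<close> in \<open>auto simp: truncate_at_def\<close>)
  then have bounded: "AE p in \<nu>r. x0 \<le> snd p \<and> snd p \<le> r"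
    unfolding \<nu>r_def by (subst AE_distr_iff) auto
  have fin: "finite_measure \<nu>r"
    unfolding \<nu>r_def by (rule finite_measure_distr) simp
  have eta_int: "set_integrable lborel {x0..r} eta" using r by (simp add: eta_domain_def)
  have fst_int: "integrable \<nu>r fst"
    unfolding \<nu>r_def using truncated(1) by (subst integrable_distr_eq) auto
  have constraint_r: "(\<integral>p. (if z \<le> snd p then fst p - z else 0) \<partial>\<nu>r) = 0" if "z \<in> {x0..r}" for z
    unfolding \<nu>r_def using truncated(3)[OF that] by (subst integral_distr) auto
  have penalty_r: "integrable \<nu>r (eta_penalty x0 eta)" "(\<integral>p. eta_penalty x0 eta p \<partial>\<nu>r) = 0"
    using integral_eta_penalty_eq_0[OF fin sets_\<nu>r eta_int bounded fst_int _ penalty_measurable]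
      constraint_r by blast+
  show "integrable \<nu> (\<lambda>p. eta_penalty x0 eta (truncate_at r p))"
    using penalty_r(1) unfolding \<nu>r_def by (subst (asm) integrable_distr_eq) auto
  show "(\<integral>p. eta_penalty x0 eta (truncate_at r p) \<partial>\<nu>) = 0"
    using penalty_r(2) unfolding \<nu>r_def by (subst (asm) integral_distr) auto
qed

section \<open>The Lagrangian\<close>

lemma E_set_sets: "\<nu> \<in> E_set x0 \<Longrightarrow> sets \<nu> = sets borel"
  by (simp add: E_set_def)

lemma E_set_iff_AE:
  assumes sets: "sets \<nu> = sets borel"
  shows "\<nu> \<in> E_set x0 \<longleftrightarrow> (AE p in \<nu>. 0 \<le> fst p \<and> 0 \<le> snd p \<and> fst p \<le> snd p \<and> x0 \<le> snd p)"
proof -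
  define B where "B = {p::real \<times> real. \<not> (0 \<le> fst p \<and> 0 \<le> snd p \<and> fst p \<le> snd p \<and> x0 \<le> snd p)}"
  have "B \<in> sets borel"
  proof -
    have "{p \<in> space borel. \<not> (0 \<le> fst p \<and> 0 \<le> snd p \<and> fst p \<le> snd p \<and> x0 \<le> snd p)}
        \<in> sets (borel :: (real \<times> real) measure)"
      by measurable
    then show ?thesis by (simp add: B_def)
  qed
  moreover have "space \<nu> = UNIV" using sets_eq_imp_space_eq[OF sets] by simp
  ultimately have "emeasure \<nu> B = 0 \<longleftrightarrow> (AE p in \<nu>. p \<notin> B)"
    using sets by (intro AE_iff_measurable[symmetric]) auto
  also have "\<dots> \<longleftrightarrow> (AE p in \<nu>. 0 \<le> fst p \<and> 0 \<le> snd p \<and> fst p \<le> snd p \<and> x0 \<le> snd p)"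
    by (rule AE_cong) (auto simp: B_def)
  finally show ?thesis using sets by (simp add: E_set_def B_def)
qed

lemma Gstar_bounds:
  assumes "prob_space \<nu>" and "sets \<nu> = sets borel"
  shows "0 \<le> Gstar \<nu> x" and "Gstar \<nu> x \<le> 1" and "mono (Gstar \<nu>)"
proof -
  interpret prob_space \<nu> by fact
  have sets: "{0..x} \<times> {0<..} \<in> sets \<nu>" for x :: real
    using assms(2) by (simp add: borel_Times)
  show "0 \<le> Gstar \<nu> x" "Gstar \<nu> x \<le> 1" by (simp_all add: Gstar_def)
  show "mono (Gstar \<nu>)"
    by (rule monoI) (auto simp: Gstar_def intro!: finite_measure_mono sets)
qed

lemma payoff_diagonal: "payoff n K F (r, r) = F r ^ (n - 1)"
  by (simp add: payoff_def algebra_simps)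

lemma payoff_bounds:
  fixes F :: "real \<Rightarrow> real"
  assumes F: "\<And>x. 0 \<le> F x" "\<And>x. F x \<le> 1" and "0 \<le> K"
  shows "- K \<le> payoff n K F p" and "payoff n K F p \<le> 1 + K"
    and "mono F \<Longrightarrow> fst p \<le> snd p \<Longrightarrow> payoff n K F p \<le> 1"
proof -
  have pow: "0 \<le> F x ^ (n - 1)" "F x ^ (n - 1) \<le> 1" for x
    using F[of x] by (auto intro: power_le_one)
  have "0 \<le> (1 + K) * F (fst p) ^ (n - 1)" "(1 + K) * F (fst p) ^ (n - 1) \<le> 1 + K"
    "0 \<le> K * F (snd p) ^ (n - 1)" "K * F (snd p) ^ (n - 1) \<le> K"
    using pow \<open>0 \<le> K\<close> by (auto intro: mult_left_le)
  then show "- K \<le> payoff n K F p" "payoff n K F p \<le> 1 + K"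
    unfolding payoff_def by linarith+
  assume "mono F" "fst p \<le> snd p"
  then have "F (fst p) ^ (n - 1) \<le> F (snd p) ^ (n - 1)"
    using F by (auto intro!: power_mono dest: monoD)
  then have "K * F (fst p) ^ (n - 1) \<le> K * F (snd p) ^ (n - 1)"
    using \<open>0 \<le> K\<close> by (rule mult_left_mono)
  then show "payoff n K F p \<le> 1" using pow[of "fst p"] unfolding payoff_def by argo
qed

lemma lag_integrand_eq:
  "lag_integrand n K F x0 lam gam eta p = payoff n K F p - lam * fst p - gam - eta_penalty x0 eta p"
  by (simp add: lag_integrand_def eta_penalty_def)

lemma lag_val_eq:
  assumes "prob_space \<nu>" and "integrable \<nu> (payoff n K F)" and "integrable \<nu> fst"
    and "(\<integral>p. fst p \<partial>\<nu>) = x0" and "integrable \<nu> (eta_penalty x0 eta)"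
  shows "lag_val n K F x0 lam gam eta \<nu>
    = (\<integral>p. payoff n K F p \<partial>\<nu>) - (\<integral>p. eta_penalty x0 eta p \<partial>\<nu>)"
proof -
  interpret prob_space \<nu> by fact
  show ?thesis
    using assms(2-5) unfolding lag_val_def lag_integrand_eq[abs_def]
    by (simp add: Bochner_Integration.integral_diff prob_space)
qed

locale lagrangian_saddle_point =
  fixes n :: nat and K x0 lam gam :: real and eta :: "real \<Rightarrow> real"
    and \<nu>s :: "(real \<times> real) measure"
  assumes x0_pos: "0 < x0" and K_nonneg: "0 \<le> K"
    and candidate: "\<nu>s \<in> ED_set x0"
    and lag_defined_candidate: "lag_defined n K (Gstar \<nu>s) x0 lam gam eta \<nu>s"
    and saddle: "\<And>\<nu>. \<nu> \<in> E_set x0 \<Longrightarrow> lag_defined n K (Gstar \<nu>s) x0 lam gam eta \<nu> \<Longrightarrow>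
      lag_val n K (Gstar \<nu>s) x0 lam gam eta \<nu> \<le> lag_val n K (Gstar \<nu>s) x0 lam gam eta \<nu>s"
begin

abbreviation G :: "real \<Rightarrow> real" where "G \<equiv> Gstar \<nu>s"
abbreviation pay :: "real \<times> real \<Rightarrow> real" where "pay \<equiv> payoff n K G"
abbreviation lag :: "real \<times> real \<Rightarrow> real" where "lag \<equiv> lag_integrand n K G x0 lam gam eta"
abbreviation penalty :: "real \<times> real \<Rightarrow> real" where "penalty \<equiv> eta_penalty x0 eta"
abbreviation L :: "(real \<times> real) measure \<Rightarrow> real" where "L \<equiv> lag_val n K G x0 lam gam eta"

lemma prob_space_candidate: "prob_space \<nu>s"
  and sets_candidate [measurable_cong]: "sets \<nu>s = sets borel"
  and AE_candidate_support: "AE p in \<nu>s. 0 \<le> fst p \<and> 0 \<le> snd p \<and> fst p \<le> snd p \<and> x0 \<le> snd p"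
  and candidate_atom_free: "emeasure \<nu>s ({x} \<times> UNIV) = 0"
  and integrable_candidate_fst: "integrable \<nu>s fst"
  and candidate_mean: "(\<integral>p. fst p \<partial>\<nu>s) = x0"
  and candidate_constraint: "\<forall>z\<ge>x0. (\<integral>p. (if z \<le> snd p then fst p - z else 0) \<partial>\<nu>s) = 0"
proof -
  have E: "\<nu>s \<in> E_set x0" using candidate by (simp add: ED_set_def)
  show "sets \<nu>s = sets borel" using E by (rule E_set_sets)
  then show "AE p in \<nu>s. 0 \<le> fst p \<and> 0 \<le> snd p \<and> fst p \<le> snd p \<and> x0 \<le> snd p"
    using E E_set_iff_AE by blast
  show "prob_space \<nu>s" "emeasure \<nu>s ({x} \<times> UNIV) = 0" "integrable \<nu>s fst"
    "(\<integral>p. fst p \<partial>\<nu>s) = x0"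
    "\<forall>z\<ge>x0. (\<integral>p. (if z \<le> snd p then fst p - z else 0) \<partial>\<nu>s) = 0"
    using candidate by (simp_all add: ED_set_def)
qed

lemma G_nonneg: "0 \<le> G x" and G_le_1: "G x \<le> 1" and mono_G: "mono G"
  using Gstar_bounds[OF prob_space_candidate sets_candidate] by auto

lemma pay_ge: "- K \<le> pay p" and pay_le: "pay p \<le> 1 + K"
  and pay_le_1: "fst p \<le> snd p \<Longrightarrow> pay p \<le> 1"
  using payoff_bounds[OF G_nonneg G_le_1 K_nonneg] mono_G by auto

lemma measurable_pay [measurable]: "pay \<in> borel_measurable borel"
proof -
  have [measurable]: "G \<in> borel_measurable borel" by (rule borel_measurable_mono[OF mono_G])
  show ?thesis unfolding payoff_def by measurable
qed

lemma integrable_pay: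
  assumes "finite_measure \<nu>" and [measurable_cong]: "sets \<nu> = sets borel"
  shows "integrable \<nu> pay"
proof -
  interpret finite_measure \<nu> by fact
  show ?thesis
  proof (rule Bochner_Integration.integrable_bound[where f="\<lambda>_. 1 + K"])
    have "\<bar>pay p\<bar> \<le> 1 + K" for p
      using pay_ge[of p] pay_le[of p] K_nonneg by linarith
    then show "AE p in \<nu>. norm (pay p) \<le> norm (1 + K)"
      using K_nonneg by simp
  qed simp_all
qed

lemma integrable_candidate_lag: "integrable \<nu>s lag"
  using lag_defined_candidate by (simp add: lag_defined_def)

lemma measurable_lag [measurable]: "lag \<in> borel_measurable borel"
  using borel_measurable_integrable[OF integrable_candidate_lag] by simp

lemma measurable_penalty [measurable]: "penalty \<in> borel_measurable borel"
proof -
  have "penalty = (\<lambda>p. pay p - lam * fst p - gam - lag p)"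
    by (simp add: lag_integrand_eq fun_eq_iff)
  then show ?thesis by simp
qed

lemma integrable_candidate_penalty: "integrable \<nu>s penalty"
proof -
  interpret prob_space \<nu>s by (rule prob_space_candidate)
  have "integrable \<nu>s (\<lambda>p. pay p - lam * fst p - gam - lag p)"
    using integrable_pay[OF finite_measure_axioms sets_candidate]
      integrable_candidate_fst integrable_candidate_lag by auto
  then show ?thesis by (simp add: lag_integrand_eq)
qed

lemma lag_val_point_mass:
  assumes "0 \<le> t" and "set_integrable lborel {x0..snd p} (\<lambda>z. eta z * (fst p - z))"
  shows "lag_defined n K G x0 lam gam eta (point_mass p t)"
    and "L (point_mass p t) = t * lag p + lam * x0 + gam"
  using integral_point_mass[OF measurable_lag \<open>0 \<le> t\<close>] AE_point_mass[where P="\<lambda>q.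
      set_integrable lborel {x0..snd q} (\<lambda>z. eta z * (fst q - z))", OF assms(2)]
  by (simp_all add: lag_defined_def lag_val_def)

text \<open>Otherwise a large point mass at \<open>p\<close> would push the Lagrangian above its maximum.\<close>
lemma lag_nonpos:
  assumes p: "0 \<le> fst p" "fst p \<le> snd p" "x0 \<le> snd p"
    and penalty: "set_integrable lborel {x0..snd p} (\<lambda>z. eta z * (fst p - z))"
  shows "lag p \<le> 0"
proof (rule ccontr)
  assume "\<not> lag p \<le> 0"
  define t where "t = (\<bar>L \<nu>s - lam * x0 - gam\<bar> + 1) / lag p"
  have "0 \<le> t" using \<open>\<not> lag p \<le> 0\<close> by (simp add: t_def)
  have "point_mass p t \<in> E_set x0"
    using AE_point_mass[of _ p t] p x0_pos by (simp add: E_set_iff_AE)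
  then have "L (point_mass p t) \<le> L \<nu>s"
    using saddle lag_val_point_mass(1)[OF \<open>0 \<le> t\<close> penalty] by blast
  moreover have "t * lag p = \<bar>L \<nu>s - lam * x0 - gam\<bar> + 1"
    using \<open>\<not> lag p \<le> 0\<close> by (simp add: t_def)
  ultimately show False
    using lag_val_point_mass(2)[OF \<open>0 \<le> t\<close> penalty] by linarith
qed

lemma AE_candidate_eta_domain: "AE p in \<nu>s. snd p \<in> eta_domain x0 eta"
proof -
  define c where "c = Sup (eta_domain x0 eta)"
  have "{c} \<times> UNIV \<in> null_sets \<nu>s"
    using candidate_atom_free by (simp add: null_sets_def borel_closed closed_Times)
  then have "AE p in \<nu>s. fst p \<noteq> c"
    by (rule AE_I') auto
  moreover have "AE p in \<nu>s. set_integrable lborel {x0..snd p} (\<lambda>z. eta z * (fst p - z))"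
    using lag_defined_candidate by (simp add: lag_defined_def)
  ultimately show ?thesis using AE_candidate_support
    by eventually_elim (auto intro: mem_eta_domain simp: c_def)
qed

lemma first_moment_eta_le:
  assumes "x0 \<le> y" and "set_integrable lborel {x0..y} eta"
  shows "(LBINT z:{x0..y}. z * eta z) \<le> max 0 (K + gam)"
proof -
  have "set_integrable lborel {x0..snd (0, y)} (\<lambda>z. eta z * (fst (0::real, y) - z))"
    using set_integrable_mult_affine[OF assms(2), of 0] by simp
  then have "lag (0, y) \<le> 0" using lag_nonpos assms(1) x0_pos by force
  then have "- penalty (0, y) \<le> max 0 (K + gam)"
    using pay_ge[of "(0, y)"] by (simp add: lag_integrand_eq)
  moreover have "penalty (0, y) = - (LBINT z:{x0..y}. z * eta z)"
    using eta_penalty_Icc[of x0 "(0, y)" eta] assms(1)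
    by (simp add: set_lebesgue_integral_def mult.commute flip: Bochner_Integration.integral_minus)
  ultimately show ?thesis by simp
qed

lemma penalty_diagonal_le:
  assumes "r \<in> eta_domain x0 eta"
  shows "penalty (r, r) \<le> max 0 (K + gam) / x0 * r"
proof -
  have r: "x0 \<le> r" "set_integrable lborel {x0..r} eta"
    using assms by (auto simp: eta_domain_def)
  have "penalty (r, r) = (LBINT z:{x0..r}. eta z * (r - z))"
    using eta_penalty_Icc[of x0 "(r, r)"] r by simp
  also have "\<dots> \<le> max 0 (K + gam) * r / x0"
    using r x0_pos by (intro set_integral_gap_le first_moment_eta_le) (auto intro: set_integrable_subset)
  finally show ?thesis by simp
qed

lemma candidate_exhausting_sequence:
  obtains R :: "nat \<Rightarrow> real" where "\<And>k. R k \<in> eta_domain x0 eta"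
    and "AE p in \<nu>s. eventually (\<lambda>k. snd p \<le> R k) sequentially"
proof -
  obtain R where R: "\<And>k. R k \<in> eta_domain x0 eta"
    and exhausting: "\<And>y. y \<in> eta_domain x0 eta \<Longrightarrow> eventually (\<lambda>k. y \<le> R k) sequentially"
    using exhausting_sequence[of "eta_domain x0 eta"] eta_domain_self by blast
  show ?thesis
  proof (rule that[OF R])
    show "AE p in \<nu>s. eventually (\<lambda>k. snd p \<le> R k) sequentially"
      using AE_candidate_eta_domain by eventually_elim (rule exhausting)
  qed
qed

text \<open>Writing \<open>h\<close> for the penalty and \<open>T\<close> for the truncation at \<open>r\<close>, we have \<open>E[h \<circ> T] = 0\<close>, and
  \<open>h - h \<circ> T\<close> vanishes below \<open>r\<close>; above \<open>r\<close> it is \<open>(h - c X) + c (X - r) + (c r - h(r, r))\<close>,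
  where \<open>E[X - r; Y > r] = 0\<close> and the last term is nonnegative.\<close>
lemma integral_tail_le_candidate_penalty:
  assumes r: "r \<in> eta_domain x0 eta"
  shows "(\<integral>p. (if r < snd p then penalty p - max 0 (K + gam) / x0 * fst p else 0) \<partial>\<nu>s)
    \<le> (\<integral>p. penalty p \<partial>\<nu>s)"
proof -
  define c where "c = max 0 (K + gam) / x0"
  interpret prob_space \<nu>s by (rule prob_space_candidate)
  have "x0 \<le> r" using r by (simp add: eta_domain_def)
  have above: "AE p in \<nu>s. x0 \<le> snd p" using AE_candidate_support by eventually_elim simp
  note truncated = integral_truncated_eta_penalty[OF finite_measure_axioms sets_candidate above
      integrable_candidate_fst candidate_constraint r measurable_penalty]
  define tail :: "(real \<times> real \<Rightarrow> real) \<Rightarrow> real \<times> real \<Rightarrow> real"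
    where "tail f p = (if r < snd p then f p else 0)" for f p
  have tail_int: "integrable \<nu>s (tail f)" if "integrable \<nu>s f" for f
    unfolding tail_def using sets_candidate that by (rule integrable_tail)
  have tail_fst: "(\<integral>p. tail (\<lambda>p. fst p - r) p \<partial>\<nu>s) = 0"
    unfolding tail_def
    by (rule constraint_strict[OF finite_measure_axioms sets_candidate integrable_candidate_fst
          candidate_constraint \<open>x0 \<le> r\<close>])
  have integrable_tails: "integrable \<nu>s (tail (\<lambda>p. penalty p - c * fst p))"
    "integrable \<nu>s (tail (\<lambda>p. fst p - r))" "integrable \<nu>s (tail (\<lambda>_. 1))"
    using integrable_candidate_penalty integrable_candidate_fst by (auto intro!: tail_int)
  have "c * r - penalty (r, r) \<ge> 0"
    using penalty_diagonal_le[OF r] x0_pos by (simp add: c_def field_simps)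
  moreover have "0 \<le> (\<integral>p. tail (\<lambda>_. 1) p \<partial>\<nu>s)"
    by (rule integral_nonneg_AE) (simp add: tail_def)
  ultimately have "(\<integral>p. tail (\<lambda>p. penalty p - c * fst p) p \<partial>\<nu>s)
      \<le> (\<integral>p. tail (\<lambda>p. penalty p - c * fst p) p \<partial>\<nu>s) + c * (\<integral>p. tail (\<lambda>p. fst p - r) p \<partial>\<nu>s)
        + (c * r - penalty (r, r)) * (\<integral>p. tail (\<lambda>_. 1) p \<partial>\<nu>s)"
    using tail_fst by simp
  also have "\<dots> = (\<integral>p. tail (\<lambda>p. penalty p - c * fst p) p + c * tail (\<lambda>p. fst p - r) p
        + (c * r - penalty (r, r)) * tail (\<lambda>_. 1) p \<partial>\<nu>s)"
    using integrable_tails by simp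
  also have "\<dots> = (\<integral>p. penalty p - penalty (truncate_at r p) \<partial>\<nu>s)"
    by (intro Bochner_Integration.integral_cong) (auto simp: tail_def truncate_at_def algebra_simps)
  also have "\<dots> = (\<integral>p. penalty p \<partial>\<nu>s)"
    using Bochner_Integration.integral_diff[OF integrable_candidate_penalty truncated(1)] truncated(2)
    by simp
  finally show ?thesis unfolding tail_def c_def .
qed

lemma integral_candidate_penalty_nonneg: "0 \<le> (\<integral>p. penalty p \<partial>\<nu>s)"
proof -
  obtain R where R: "\<And>k. R k \<in> eta_domain x0 eta"
    and exhausting: "AE p in \<nu>s. eventually (\<lambda>k. snd p \<le> R k) sequentially"
    using candidate_exhausting_sequence by blast
  define c where "c = max 0 (K + gam) / x0"
  have "(\<lambda>k. \<integral>p. (if R k < snd p then penalty p - c * fst p else 0) \<partial>\<nu>s) \<longlonglongrightarrow> 0"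
    using integrable_candidate_penalty integrable_candidate_fst
    by (intro tendsto_integral_tail[OF sets_candidate _ exhausting]) simp
  then show ?thesis
    using integral_tail_le_candidate_penalty[OF R] unfolding c_def by (intro LIMSEQ_le_const2) auto
qed

lemma G_tendsto_1:
  fixes R :: "nat \<Rightarrow> real"
  assumes exhausting: "AE p in \<nu>s. eventually (\<lambda>k. snd p \<le> R k) sequentially"
  shows "(\<lambda>k. G (R k)) \<longlonglongrightarrow> 1"
proof (rule tendsto_sandwich[where f="\<lambda>k. 1 - (\<integral>p. (if R k < snd p then 1 else 0 :: real) \<partial>\<nu>s)"])
  interpret prob_space \<nu>s by (rule prob_space_candidate)
  have "(\<lambda>k. \<integral>p. (if R k < snd p then 1 else 0 :: real) \<partial>\<nu>s) \<longlonglongrightarrow> 0"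
    using tendsto_integral_tail[OF sets_candidate _ exhausting, of "\<lambda>_. 1"] by simp
  from tendsto_diff[OF tendsto_const this]
  show "(\<lambda>k. 1 - (\<integral>p. (if R k < snd p then 1 else 0 :: real) \<partial>\<nu>s)) \<longlonglongrightarrow> 1"
    by simp
  show "eventually (\<lambda>k. G (R k) \<le> 1) sequentially" using G_le_1 by simp
  have "1 - (\<integral>p. (if R k < snd p then 1 else 0 :: real) \<partial>\<nu>s) \<le> G (R k)" for k
  proof -
    define A :: "(real \<times> real) set" where "A = {0..R k} \<times> {0<..}"
    have tail_int: "integrable \<nu>s (\<lambda>p. if R k < snd p then 1 else 0 :: real)"
      using integrable_tail[OF sets_candidate, of "\<lambda>_. 1"] by simp
    have "A \<in> sets \<nu>s"
      unfolding A_def sets_candidate by (simp add: borel_Times)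
    have "(\<integral>p. 1 - (if R k < snd p then 1 else 0 :: real) \<partial>\<nu>s) \<le> (\<integral>p. indicator A p \<partial>\<nu>s)"
    proof (rule integral_mono_AE)
      show "integrable \<nu>s (indicator A :: real \<times> real \<Rightarrow> real)"
        using \<open>A \<in> sets \<nu>s\<close> by (intro integrable_real_indicator) (auto simp: less_top[symmetric])
      show "AE p in \<nu>s. 1 - (if R k < snd p then 1 else 0) \<le> (indicator A p :: real)"
        using AE_candidate_support
        by eventually_elim (use x0_pos in \<open>auto simp: A_def indicator_def\<close>)
    qed (use tail_int in simp)
    also have "\<dots> = G (R k)"
      using \<open>A \<in> sets \<nu>s\<close> by (simp add: Gstar_def A_def)
    finally show ?thesis
      using tail_int by (simp add: Bochner_Integration.integral_diff prob_space)
  qed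
  then show "eventually (\<lambda>k. 1 - (\<integral>p. (if R k < snd p then 1 else 0 :: real) \<partial>\<nu>s) \<le> G (R k)) sequentially"
    by simp
qed simp

lemma lag_val_candidate_le: "L \<nu>s \<le> (\<integral>p. pay p \<partial>\<nu>s)"
proof -
  have "L \<nu>s = (\<integral>p. pay p \<partial>\<nu>s) - (\<integral>p. penalty p \<partial>\<nu>s)"
    using prob_space_candidate
    by (rule lag_val_eq) (use integrable_pay[OF prob_space.finite_measure[OF prob_space_candidate]
        sets_candidate] integrable_candidate_fst candidate_mean integrable_candidate_penalty in auto)
  with integral_candidate_penalty_nonneg show ?thesis by simp
qed

lemma lag_val_truncated:
  assumes "\<nu> \<in> E_set x0" and "prob_space \<nu>" and fst: "integrable \<nu> fst"
    and mean: "(\<integral>p. fst p \<partial>\<nu>) = x0"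
    and constraint: "\<forall>z\<ge>x0. (\<integral>p. (if z \<le> snd p then fst p - z else 0) \<partial>\<nu>) = 0"
    and r: "r \<in> eta_domain x0 eta"
  shows "distr \<nu> borel (truncate_at r) \<in> E_set x0"
    and "lag_defined n K G x0 lam gam eta (distr \<nu> borel (truncate_at r))"
    and "L (distr \<nu> borel (truncate_at r)) = (\<integral>p. pay p \<partial>distr \<nu> borel (truncate_at r))"
proof -
  interpret prob_space \<nu> by fact
  define \<nu>r where "\<nu>r = distr \<nu> borel (truncate_at r)"
  have sets [measurable_cong]: "sets \<nu> = sets borel" using assms(1) by (rule E_set_sets)
  have sets_r [measurable_cong]: "sets \<nu>r = sets borel" by (simp add: \<nu>r_def)
  have prob_r: "prob_space \<nu>r" unfolding \<nu>r_def by (rule prob_space_distr) simp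
  have "x0 \<le> r" using r by (simp add: eta_domain_def)
  have support: "AE p in \<nu>. 0 \<le> fst p \<and> 0 \<le> snd p \<and> fst p \<le> snd p \<and> x0 \<le> snd p"
    using assms(1) sets by (simp add: E_set_iff_AE)
  then have "AE p in \<nu>. x0 \<le> snd p" by eventually_elim simp
  note truncated = integral_truncated_eta_penalty[OF finite_measure_axioms sets this fst constraint r
      measurable_penalty]
  note constraints = truncate_at_constraints[OF finite_measure_axioms sets fst constraint \<open>x0 \<le> r\<close>]
  have "AE p in \<nu>. (\<lambda>q. (0 \<le> fst q \<and> 0 \<le> snd q \<and> fst q \<le> snd q \<and> x0 \<le> snd q) \<and> snd q \<le> r)
      (truncate_at r p)"
    using support by eventually_elim (use \<open>x0 \<le> r\<close> x0_pos in \<open>auto simp: truncate_at_def\<close>)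
  then have support_r: "AE p in \<nu>r. (0 \<le> fst p \<and> 0 \<le> snd p \<and> fst p \<le> snd p \<and> x0 \<le> snd p) \<and> snd p \<le> r"
    unfolding \<nu>r_def by (subst AE_distr_iff) auto
  then show "distr \<nu> borel (truncate_at r) \<in> E_set x0"
    unfolding \<nu>r_def[symmetric] E_set_iff_AE[OF sets_r] by eventually_elim simp
  have fst_r: "integrable \<nu>r fst" "(\<integral>p. fst p \<partial>\<nu>r) = x0"
    using constraints(1,2) mean unfolding \<nu>r_def by (simp_all add: integrable_distr_eq integral_distr)
  have penalty_r: "integrable \<nu>r penalty" "(\<integral>p. penalty p \<partial>\<nu>r) = 0"
    using truncated unfolding \<nu>r_def by (simp_all add: integrable_distr_eq integral_distr)
  have pay_r: "integrable \<nu>r pay"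
    using integrable_pay[OF prob_space.finite_measure[OF prob_r] sets_r] .
  have "AE p in \<nu>r. set_integrable lborel {x0..snd p} (\<lambda>z. eta z * (fst p - z))"
    using support_r by eventually_elim (use r in \<open>auto intro: set_integrable_penalty_of_eta_domain\<close>)
  moreover have "integrable \<nu>r lag"
    using pay_r fst_r penalty_r prob_space.finite_measure[OF prob_r] 
    by (simp add: lag_integrand_eq[abs_def] finite_measure.integrable_const)
  ultimately show "lag_defined n K G x0 lam gam eta (distr \<nu> borel (truncate_at r))"
    unfolding \<nu>r_def[symmetric] lag_defined_def ..
  show "L (distr \<nu> borel (truncate_at r)) = (\<integral>p. pay p \<partial>distr \<nu> borel (truncate_at r))"
    using lag_val_eq[OF prob_r pay_r fst_r penalty_r(1)] penalty_r(2) unfolding \<nu>r_def by simp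
qed

text \<open>Truncation only changes points with \<open>Y > r\<close>, where the payoff is at most \<open>1\<close> before and
  \<open>G(r)\<^sup>n\<^sup>-\<^sup>1\<close> after.\<close>
lemma integral_pay_le_truncated:
  assumes "\<nu> \<in> E_set x0" and "prob_space \<nu>"
  shows "(\<integral>p. pay p \<partial>\<nu>) - (1 - G r ^ (n - 1)) \<le> (\<integral>p. pay p \<partial>distr \<nu> borel (truncate_at r))"
proof -
  interpret prob_space \<nu> by fact
  have sets [measurable_cong]: "sets \<nu> = sets borel" using assms(1) by (rule E_set_sets)
  have pay_int: "integrable \<nu> pay" by (rule integrable_pay[OF finite_measure_axioms sets])
  have "(\<integral>p. pay p \<partial>\<nu>) - (1 - G r ^ (n - 1)) = (\<integral>p. pay p - (1 - G r ^ (n - 1)) \<partial>\<nu>)"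
    using pay_int by (simp add: prob_space)
  also have "\<dots> \<le> (\<integral>p. pay (truncate_at r p) \<partial>\<nu>)"
  proof (rule integral_mono_AE)
    have "integrable (distr \<nu> borel (truncate_at r)) pay"
      by (rule integrable_pay) (auto intro: finite_measure_distr)
    then show "integrable \<nu> (\<lambda>p. pay (truncate_at r p))"
      by (simp add: integrable_distr_eq)
    have "AE p in \<nu>. 0 \<le> fst p \<and> 0 \<le> snd p \<and> fst p \<le> snd p \<and> x0 \<le> snd p"
      using assms(1) sets by (simp add: E_set_iff_AE)
    then show "AE p in \<nu>. pay p - (1 - G r ^ (n - 1)) \<le> pay (truncate_at r p)"
    proof eventually_elim
      case (elim p)
      have "0 \<le> 1 - G r ^ (n - 1)" using G_nonneg G_le_1 by (simp add: power_le_one)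
      with elim pay_le_1[of p] show ?case
        by (auto simp: truncate_at_def payoff_diagonal)
    qed
  qed (use pay_int in simp)
  also have "\<dots> = (\<integral>p. pay p \<partial>distr \<nu> borel (truncate_at r))"
    by (simp add: integral_distr)
  finally show ?thesis .
qed

theorem integral_pay_le_candidate:
  assumes "\<nu> \<in> E_set x0" and "prob_space \<nu>" and "integrable \<nu> fst"
    and "(\<integral>p. fst p \<partial>\<nu>) = x0"
    and "\<forall>z\<ge>x0. (\<integral>p. (if z \<le> snd p then fst p - z else 0) \<partial>\<nu>) = 0"
  shows "(\<integral>p. pay p \<partial>\<nu>) \<le> (\<integral>p. pay p \<partial>\<nu>s)"
proof -
  obtain R where R: "\<And>k. R k \<in> eta_domain x0 eta"
    and exhausting: "AE p in \<nu>s. eventually (\<lambda>k. snd p \<le> R k) sequentially"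
    using candidate_exhausting_sequence by blast
  have "(\<integral>p. pay p \<partial>\<nu>) - (1 - G (R k) ^ (n - 1)) \<le> (\<integral>p. pay p \<partial>\<nu>s)" for k
  proof -
    have "(\<integral>p. pay p \<partial>\<nu>) - (1 - G (R k) ^ (n - 1))
        \<le> (\<integral>p. pay p \<partial>distr \<nu> borel (truncate_at (R k)))"
      by (rule integral_pay_le_truncated[OF assms(1,2)])
    also have "\<dots> = L (distr \<nu> borel (truncate_at (R k)))"
      using lag_val_truncated(3)[OF assms R] by simp
    also have "\<dots> \<le> L \<nu>s"
      using saddle lag_val_truncated(1,2)[OF assms R] .
    also have "\<dots> \<le> (\<integral>p. pay p \<partial>\<nu>s)" by (rule lag_val_candidate_le)
    finally show ?thesis .
  qed
  moreover have "(\<lambda>k. (\<integral>p. pay p \<partial>\<nu>) - (1 - G (R k) ^ (n - 1)))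
      \<longlonglongrightarrow> (\<integral>p. pay p \<partial>\<nu>) - (1 - 1 ^ (n - 1))"
    by (intro tendsto_intros G_tendsto_1 exhausting)
  ultimately show ?thesis by (intro LIMSEQ_le_const2) auto
qed

end

theorem proposition2:
  fixes n :: nat and x0 K lam gam :: real and eta :: "real \<Rightarrow> real"
    and \<nu>s :: "(real \<times> real) measure"
  assumes "n \<ge> 2" and "x0 > 0" and "K \<ge> 0"
    and "\<nu>s \<in> ED_set x0"
    and "lag_defined n K (Gstar \<nu>s) x0 lam gam eta \<nu>s"
    and "\<forall>\<nu>\<in>E_set x0. lag_defined n K (Gstar \<nu>s) x0 lam gam eta \<nu> \<longrightarrow>
           lag_val n K (Gstar \<nu>s) x0 lam gam eta \<nu>s \<ge> lag_val n K (Gstar \<nu>s) x0 lam gam eta \<nu>"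
  shows "\<forall>\<nu>\<in>E_set x0.
           (integrable \<nu> fst \<and> (\<integral>p. fst p \<partial>\<nu>) = x0 \<and> emeasure \<nu> (space \<nu>) = 1 \<and>
            (\<forall>z\<ge>x0. (\<integral>p. (if z \<le> snd p then fst p - z else 0) \<partial>\<nu>) = 0)) \<longrightarrow>
           (\<integral>p. payoff n K (Gstar \<nu>s) p \<partial>\<nu>s) \<ge> (\<integral>p. payoff n K (Gstar \<nu>s) p \<partial>\<nu>)"
proof -
  interpret lagrangian_saddle_point n K x0 lam gam eta \<nu>s
    using assms(2-6) by unfold_locales auto
  show ?thesis
    using integral_pay_le_candidate prob_spaceI by blast
qed

end
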